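(* In the setting of problem (P) with $f_0(x)=\mathbb{E}_\xi[F(x,\xi)]$, run Algorithm LCSPG with parameters $\gamma_k>L_0/2$. Then for every $k$ the $k$-th subproblem admits a Lagrange multiplier $\lambda^{k+1}\in\mathbb{R}^m_+$ (KKT conditions with $\psi_0^k$ as defined in LCSPG), and for any $\beta_k\in(0,2\gamma_k-L_0)$, $$\psi_0(x^{k+1})\le\psi_0(x^k)-\frac{2\gamma_k-\beta_k-L_0}{2}\|x^{k+1}-x^k\|^2+\frac{\|\zeta^k\|^2}{2\beta_k},$$ where $\zeta^k:=G^k-\nabla f_0(x^k)$.
   Context: Problem (P): minimize $\psi_0(x):=f_0(x)+\chi_0(x)$ over $x\in\mathbb{R}^d$ subject to $\psi_i(x):=f_i(x)+\chi_i(x)\le\eta_i$, $i\in[m]:=\{1,\dots,m\}$. Standing assumptions: $\chi_0$ is proper, convex, lower semicontinuous; each $\chi_i$ ($i\in[m]$) is convex and continuous on $\mathrm{dom}\,\chi_0$; each $f_i$ ($i=0,\dots,m$) is differentiable with $L_i$-Lipschitz gradient on $\mathrm{dom}\,\chi_0$; $L:=(L_1,\dots,L_m)^\top$; the optimal value $\psi_0^*$ of (P) is finite; the feasible set $\mathcal{X}:=\{x\in\mathrm{dom}\,\chi_0:\psi_i(x)\le\eta_i,\ i\in[m]\}$ is nonempty and compact. Vector inequalities are componentwise. Stochastic setting: $f_0(x)=\mathbb{E}_\xi[F(x,\xi)]$ with $F(\cdot,\xi)$ differentiable; a stochastic first-order oracle returns $\nabla F(x,\xi)$ with $\mathbb{E}[\nabla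 F(x,\xi)]=\nabla f_0(x)$ and $\mathbb{E}\|\nabla F(x,\xi)-\nabla f_0(x)\|^2\le\sigma^2$. Algorithm LCSPG: given $x^0\in\mathrm{dom}\,\chi_0$, $\eta^0$ with $\psi(x^0)<\eta^0<\eta$, batch sizes $b_k$, $\gamma_k>0$. At step $k$: draw $b_k$ i.i.d. samples $\xi_{1,k},\dots,\xi_{b_k,k}$ and set $G^k=\frac1{b_k}\sum_{j}\nabla F(x^k,\xi_{j,k})$; set $\psi_0^k(x)=\langle G^k,x\rangle+\frac{\gamma_k}{2}\|x-x^k\|^2+\chi_0(x)$ and, for $i\in[m]$, $\psi_i^k(x)=f_i(x^k)+\langle\nabla f_i(x^k),x-x^k\rangle+\frac{L_i}{2}\|x-x^k\|^2+\chi_i(x)$; let $x^{k+1}$ minimize $\psi_0^k$ subject to $\psi_i^k(x)\le\eta_i^k$, $i\in[m]$; set $\eta^{k+1}=\eta^k+\delta^k$ with $\delta^k>0$ and $\eta^{k+1}<\eta$. A Lagrange multiplier $\lambda^{k+1}\in\mathbb{R}^m_+$ satisfies $0\in\partial\psi_0^k(x^{k+1})+\sum_i\lambda_i^{k+1}\partial\psi_i^k(x^{k+1})$ and $\lambda_i^{k+1}(\psi_i^k(x^{k+1})-\eta_i^k)=0$. *)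

theory Defs
  imports "HOL-Analysis.Analysis" "HOL-Probability.Probability"
begin

text \<open>Subdifferential of a convex function h that is finite on S and equal to +infinity
  outside S (for a real-valued function on the whole space take S = UNIV).\<close>
definition subdiff :: "'a set \<Rightarrow> ('a::real_inner \<Rightarrow> real) \<Rightarrow> 'a \<Rightarrow> 'a set" where
  "subdiff S h x = {g. \<forall>y\<in>S. h x + inner g (y - x) \<le> h y}"

text \<open>A proper, convex, lower semicontinuous extended-real function, represented by its
  effective domain D and its (finite) values on D; it is +infinity outside D.\<close>
definition proper_convex_lsc :: "'a::real_normed_vector set \<Rightarrow> ('a \<Rightarrow> real) \<Rightarrow> bool" where
  "proper_convex_lsc D h \<longleftrightarrow> D \<noteq> {} \<and> convex D \<and> convex_on D h \<and>
     closed {(x, t). x \<in> D \<and> h x \<le> t}"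

definition obj_model :: "'a \<Rightarrow> real \<Rightarrow> 'a \<Rightarrow> ('a \<Rightarrow> real) \<Rightarrow> 'a::real_inner \<Rightarrow> real" where
  "obj_model G \<gamma> xk \<chi>0 y = inner G y + \<gamma> / 2 * (norm (y - xk))\<^sup>2 + \<chi>0 y"

definition con_model :: "('a \<Rightarrow> real) \<Rightarrow> 'a \<Rightarrow> real \<Rightarrow> ('a \<Rightarrow> real) \<Rightarrow> 'a \<Rightarrow> 'a::real_inner \<Rightarrow> real" where
  "con_model fi gi Li \<chi>i xk y = fi xk + inner gi (y - xk) + Li / 2 * (norm (y - xk))\<^sup>2 + \<chi>i y"

end

theory Submission
  imports Defs
begin

text \<open>
  Each LCSPG subproblem is a convex program, and the current iterate x_k is a Slater point for
  it: the linearised constraint at x_k takes the value psi_i(x_k) there, and by the descent lemma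
  psi_i(x_k) is bounded by the previous level eta_{k-1,i} < eta_{k,i}. Slater's condition yields
  Lagrange multipliers, one constraint at a time by a slope argument, and the subdifferential sum
  rule, obtained by separating the epigraph of one summand from the strict hypograph of the
  other, turns minimality of the Lagrangian into the KKT inclusion.
  Since x_k is feasible for the subproblem, strong convexity of the proximal term gives
  <G_k, x_{k+1}> + chi_0(x_{k+1}) + gamma_k |x_{k+1} - x_k|^2 <= <G_k, x_k> + chi_0(x_k);
  the descent lemma for f_0 and Young's inequality for <zeta_k, x_{k+1} - x_k> then give the
  estimate. It holds pathwise.
\<close>

section \<open>Subgradients at minimisers\<close>

lemma convex_strict_hypograph:
  assumes "concave_on S h"
  shows "convex {(y, t). y \<in> S \<and> t < h y}"
  unfolding convex_def
proof (clarsimp)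
  fix y1 t1 y2 t2 and u v :: real
  assume h: "y1 \<in> S" "t1 < h y1" "y2 \<in> S" "t2 < h y2" "0 \<le> u" "0 \<le> v" "u + v = 1"
  have "u * t1 + v * t2 < u * h y1 + v * h y2"
    using h by (cases "u = 0") (auto intro!: add_less_le_mono mult_strict_left_mono mult_left_mono)
  also have "\<dots> \<le> h (u *\<^sub>R y1 + v *\<^sub>R y2)"
    using assms h unfolding concave_on_def convex_on_def by (auto simp: algebra_simps)
  finally show "u *\<^sub>R y1 + v *\<^sub>R y2 \<in> S \<and> u * t1 + v * t2 < h (u *\<^sub>R y1 + v *\<^sub>R y2)"
    using assms h by (auto simp: concave_on_def convex_on_def convexD)
qed

lemma subdiff_iff_tilted_minimizer:
  "g \<in> subdiff S h x \<longleftrightarrow> (\<forall>y\<in>S. h x - inner g x \<le> h y - inner g y)"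
  by (auto simp: subdiff_def inner_diff_right)

lemma minimizer_imp_opposite_subgradients:
  fixes p q :: "'a::euclidean_space \<Rightarrow> real"
  assumes "convex D" "convex_on D p" "convex_on UNIV q" "x \<in> D"
    and min: "\<forall>y\<in>D. p x + q x \<le> p y + q y"
  shows "\<exists>a. a \<in> subdiff D p x \<and> -a \<in> subdiff UNIV q x"
proof -
  define S where "S = epigraph D (\<lambda>y. p y - p x)"
  define T where "T = {(y, t). y \<in> UNIV \<and> t < q x - q y}"
  have "convex S"
    unfolding S_def using assms by (intro convex_epigraphI convex_on_diff) (auto simp: concave_on_const)
  moreover have "convex T"
    unfolding T_def using assms
    by (intro convex_strict_hypograph concave_on_diff) (auto simp: concave_on_const)
  moreover have "S \<inter> T = {}"
    using min by (force simp: S_def T_def mem_epigraph)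
  moreover have "(x, 0) \<in> S" "(x, -1) \<in> T"
    using \<open>x \<in> D\<close> by (auto simp: S_def T_def mem_epigraph)
  ultimately obtain a \<alpha> b where "(a, \<alpha>) \<noteq> 0"
    and below: "\<And>y t. (y, t) \<in> S \<Longrightarrow> inner a y + \<alpha> * t \<le> b"
    and above: "\<And>y t. (y, t) \<in> T \<Longrightarrow> b \<le> inner a y + \<alpha> * t"
    using separating_hyperplane_sets[of S T] by (force simp: inner_prod_def)
  have "\<alpha> \<le> 0"
  proof (rule ccontr)
    assume "\<not> \<alpha> \<le> 0"
    then have "inner a x + \<alpha> * (\<bar>b - inner a x\<bar> / \<alpha> + 1) \<le> b"
      using below[of x] \<open>x \<in> D\<close> by (auto simp: S_def mem_epigraph)
    then show False
      using \<open>\<not> \<alpha> \<le> 0\<close> by (simp add: distrib_left)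
  qed
  moreover have "\<alpha> \<noteq> 0"
  proof
    assume "\<alpha> = 0"
    then have "a \<noteq> 0" "\<And>y. b \<le> inner a y"
      using \<open>(a, \<alpha>) \<noteq> 0\<close> above[of y "q x - q y - 1" for y] by (auto simp: T_def zero_prod_def)
    then show False
      using \<open>\<And>y. b \<le> inner a y\<close>[of "((b - 1) / inner a a) *\<^sub>R a"] by simp
  qed
  ultimately have "\<alpha> < 0" by simp
  \<comment> \<open>After normalising \<open>\<alpha> = -1\<close>, the hyperplane is the graph of an affine function
      lying between \<open>p - p x\<close> on \<open>D\<close> and \<open>q x - q\<close> on the whole space.\<close>
  define e where "e = (-1 / \<alpha>) *\<^sub>R a"
  define c where "c = - b / \<alpha>"
  have sep: "inner e y - t \<le> c \<longleftrightarrow> inner a y + \<alpha> * t \<le> b" for y t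
  proof -
    have "inner e y - t - c = (inner a y + \<alpha> * t - b) / (- \<alpha>)"
      using \<open>\<alpha> < 0\<close> by (simp add: e_def c_def field_simps)
    moreover have "(inner a y + \<alpha> * t - b) / (- \<alpha>) \<le> 0 \<longleftrightarrow> inner a y + \<alpha> * t - b \<le> 0"
      using \<open>\<alpha> < 0\<close> by (simp add: zero_le_divide_iff)
    ultimately show ?thesis by linarith
  qed
  have below_p: "inner e y - c \<le> p y - p x" if "y \<in> D" for y
    using below[of y "p y - p x"] sep[of y "p y - p x"] that by (simp add: S_def mem_epigraph)
  have above_q: "q x - q y \<le> inner e y - c" for y
  proof (rule dense_le)
    fix t assume "t < q x - q y"
    then have "b \<le> inner a y + \<alpha> * t"
      using above by (simp add: T_def)
    then show "t \<le> inner e y - c"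
      using sep[of y t] \<open>\<alpha> < 0\<close> by (simp add: e_def c_def field_simps)
  qed
  have "c = inner e x"
    using below_p[OF \<open>x \<in> D\<close>] above_q[of x] by linarith
  have "p x + inner e (y - x) \<le> p y" if "y \<in> D" for y
    using below_p[OF that] \<open>c = inner e x\<close> by (simp add: inner_diff_right)
  moreover have "q x + inner (-e) (y - x) \<le> q y" for y
    using above_q[of y] \<open>c = inner e x\<close> by (simp add: inner_diff_right)
  ultimately show ?thesis
    unfolding subdiff_def by blast
qed

lemma subdiff_nonempty:
  fixes q :: "'a::euclidean_space \<Rightarrow> real"
  assumes "convex_on UNIV q"
  shows "subdiff UNIV q x \<noteq> {}"
  using minimizer_imp_opposite_subgradients[of "{x}" "\<lambda>_. 0" q x] assms
  by (auto simp: convex_on_const)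

lemma subdiff_cmult:
  fixes q :: "'a::euclidean_space \<Rightarrow> real"
  assumes "0 \<le> l" "convex_on UNIV q" "a \<in> subdiff UNIV (\<lambda>y. l * q y) x"
  shows "\<exists>g \<in> subdiff UNIV q x. a = l *\<^sub>R g"
proof (cases "l = 0")
  case True
  then have "\<forall>y. inner a (y - x) \<le> 0"
    using assms(3) by (simp add: subdiff_def)
  then have "a = 0"
    by (metis add_diff_cancel_left' inner_gt_zero_iff not_le)
  then show ?thesis
    using subdiff_nonempty[OF assms(2)] True by auto
next
  case False
  have "(1 / l) *\<^sub>R a \<in> subdiff UNIV q x"
    using assms(1,3) False unfolding subdiff_def
    by (auto simp: field_simps)
  then show ?thesis
    using False by (intro bexI[of _ "(1 / l) *\<^sub>R a"]) auto
qed

lemma convex_on_nonneg_combination: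
  assumes "finite I" "convex D" "\<forall>i\<in>I. convex_on D (q i)" "\<forall>i\<in>I. 0 \<le> l i"
  shows "convex_on D (\<lambda>y. \<Sum>i\<in>I. l i * q i y)"
  using assms by (induction I rule: finite_induct) (auto simp: convex_on_const)

lemma convex_on_inner_affine:
  fixes a :: "'a::real_inner"
  assumes "convex S"
  shows "convex_on S (\<lambda>y. inner a y + b)"
  using assms unfolding convex_on_def
  by (auto simp: inner_add_right algebra_simps simp flip: distrib_right)

lemma minimizer_imp_subgradient_sum:
  fixes p :: "'a::euclidean_space \<Rightarrow> real"
  assumes "finite I" "convex D" "convex_on D p" "\<forall>i\<in>I. convex_on UNIV (q i)" "\<forall>i\<in>I. 0 \<le> l i"
    "x \<in> D" "\<forall>y\<in>D. p x + (\<Sum>i\<in>I. l i * q i x) \<le> p y + (\<Sum>i\<in>I. l i * q i y)"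
  shows "\<exists>g0 g. g0 \<in> subdiff D p x \<and> (\<forall>i\<in>I. g i \<in> subdiff UNIV (q i) x) \<and>
           g0 + (\<Sum>i\<in>I. l i *\<^sub>R g i) = 0"
  using assms
proof (induction I arbitrary: p rule: finite_induct)
  case empty
  then show ?case by (auto simp: subdiff_def)
next
  case (insert j I)
  let ?rest = "\<lambda>y. p y + (\<Sum>i\<in>I. l i * q i y)"
  have "convex_on D ?rest"
    using insert by (intro convex_on_add convex_on_nonneg_combination) (auto intro: convex_on_subset)
  moreover have "convex_on UNIV (\<lambda>y. l j * q j y)"
    using insert by auto
  moreover have "\<forall>y\<in>D. ?rest x + l j * q j x \<le> ?rest y + l j * q j y"
    using insert by (simp add: algebra_simps)
  ultimately obtain a where a: "a \<in> subdiff D ?rest x" "-a \<in> subdiff UNIV (\<lambda>y. l j * q j y) x"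
    using minimizer_imp_opposite_subgradients insert.prems by blast
  obtain gj where gj: "gj \<in> subdiff UNIV (q j) x" "-a = l j *\<^sub>R gj"
    using subdiff_cmult a(2) insert.prems by (metis insertI1)
  \<comment> \<open>\<open>x\<close> minimises the remaining sum once \<open>p\<close> is tilted by the subgradient \<open>a\<close>\<close>
  have "convex_on D (\<lambda>y. p y + (inner (-a) y + 0))"
    using insert.prems by (intro convex_on_add convex_on_inner_affine)
  moreover have "\<forall>y\<in>D. (p x - inner a x) + (\<Sum>i\<in>I. l i * q i x) \<le> (p y - inner a y) + (\<Sum>i\<in>I. l i * q i y)"
    using a(1) by (simp add: subdiff_iff_tilted_minimizer algebra_simps)
  ultimately obtain g0 g where g0: "g0 \<in> subdiff D (\<lambda>y. p y - inner a y) x"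
    and g: "\<forall>i\<in>I. g i \<in> subdiff UNIV (q i) x" and sum: "g0 + (\<Sum>i\<in>I. l i *\<^sub>R g i) = 0"
    using insert.IH[of "\<lambda>y. p y - inner a y"] insert.prems by auto
  have "g0 + a \<in> subdiff D p x"
    using g0 by (simp add: subdiff_iff_tilted_minimizer inner_add_left algebra_simps)
  moreover have "(\<Sum>i\<in>insert j I. l i *\<^sub>R (g(j := gj)) i) = - a + (\<Sum>i\<in>I. l i *\<^sub>R g i)"
    using insert.hyps gj(2) by (auto intro!: sum.cong)
  then have "g0 + a + (\<Sum>i\<in>insert j I. l i *\<^sub>R (g(j := gj)) i) = 0"
    using sum by (simp add: add.assoc)
  ultimately show ?case
    using g gj(1) by (intro exI[of _ "g0 + a"] exI[of _ "g(j := gj)"]) auto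
qed

section \<open>Lagrange multipliers under Slater's condition\<close>

lemma convex_sublevel_set:
  assumes "convex_on D f"
  shows "convex {y \<in> D. f y \<le> a}"
  unfolding convex_def
proof (clarsimp)
  fix x y and u v :: real
  assume h: "x \<in> D" "f x \<le> a" "y \<in> D" "f y \<le> a" "0 \<le> u" "0 \<le> v" "u + v = 1"
  have "f (u *\<^sub>R x + v *\<^sub>R y) \<le> u * f x + v * f y"
    using assms h unfolding convex_on_def by blast
  also have "\<dots> \<le> u * a + v * a"
    using h by (intro add_mono mult_left_mono) auto
  finally show "u *\<^sub>R x + v *\<^sub>R y \<in> D \<and> f (u *\<^sub>R x + v *\<^sub>R y) \<le> a"
    using assms h by (auto simp: convex_on_imp_convex convexD simp flip: distrib_right)
qed

lemma convex_min_slope_across_constraint: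
  fixes p c :: "'a::real_vector \<Rightarrow> real"
  assumes "convex D" "convex_on D p" "convex_on D c"
    and min: "\<forall>w\<in>D. c w \<le> 0 \<longrightarrow> p xs \<le> p w"
    and "y \<in> D" "c y > 0" "z \<in> D" "c z < 0"
  shows "(p xs - p y) / c y \<le> (p z - p xs) / (- c z)"
proof -
  \<comment> \<open>the point of the segment from \<open>z\<close> to \<open>y\<close> where the linear interpolation of \<open>c\<close> vanishes\<close>
  define \<theta> where "\<theta> = - c z / (c y - c z)"
  have "0 \<le> \<theta>" "\<theta> \<le> 1" "(c y - c z) * (1 - \<theta>) = c y" "(c y - c z) * \<theta> = - c z"
    using assms(6,8) by (auto simp: \<theta>_def field_simps)
  define w where "w = (1 - \<theta>) *\<^sub>R z + \<theta> *\<^sub>R y"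
  have "w \<in> D"
    unfolding w_def using assms \<open>0 \<le> \<theta>\<close> \<open>\<theta> \<le> 1\<close> by (simp add: convex_alt)
  have "c w \<le> (1 - \<theta>) * c z + \<theta> * c y"
    unfolding w_def using convex_onD[OF assms(3)] assms \<open>0 \<le> \<theta>\<close> \<open>\<theta> \<le> 1\<close> by blast
  also have "\<dots> = 0"
    using assms(6,8) by (simp add: \<theta>_def field_simps)
  finally have "p xs \<le> p w"
    using min \<open>w \<in> D\<close> by blast
  also have "p w \<le> (1 - \<theta>) * p z + \<theta> * p y"
    unfolding w_def using convex_onD[OF assms(2)] assms \<open>0 \<le> \<theta>\<close> \<open>\<theta> \<le> 1\<close> by blast
  finally have "(c y - c z) * p xs \<le> (c y - c z) * ((1 - \<theta>) * p z + \<theta> * p y)"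
    using assms(6,8) by (simp add: mult_left_mono)
  also have "\<dots> = ((c y - c z) * (1 - \<theta>)) * p z + ((c y - c z) * \<theta>) * p y"
    by (simp add: algebra_simps)
  finally have "(c y - c z) * p xs \<le> c y * p z - c z * p y"
    using \<open>(c y - c z) * (1 - \<theta>) = c y\<close> \<open>(c y - c z) * \<theta> = - c z\<close> by simp
  then show ?thesis
    using assms(6,8) by (simp add: field_simps)
qed

lemma lagrange_multiplier_single_constraint:
  fixes p c :: "'a::real_vector \<Rightarrow> real"
  assumes "convex D" "convex_on D p" "convex_on D c" "xs \<in> D" "c xs \<le> 0"
    and min: "\<forall>y\<in>D. c y \<le> 0 \<longrightarrow> p xs \<le> p y"
    and "xb \<in> D" "c xb < 0"
  shows "\<exists>l\<ge>0. l * c xs = 0 \<and> (\<forall>y\<in>D. p xs \<le> p y + l * c y)"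
proof -
  note slope = convex_min_slope_across_constraint[OF assms(1-3) min]
  \<comment> \<open>any \<open>l\<close> between the two families of slopes works; inserting \<open>0\<close> makes it nonnegative\<close>
  define l where "l = Sup (insert 0 {(p xs - p y) / c y | y. y \<in> D \<and> c y > 0})"
  have bdd: "bdd_above (insert 0 {(p xs - p y) / c y | y. y \<in> D \<and> c y > 0})"
    unfolding bdd_above_insert using slope[OF _ _ assms(7,8)]
    by (intro bdd_aboveI[of _ "(p xb - p xs) / (- c xb)"]) auto
  have "0 \<le> l"
    unfolding l_def using bdd by (intro cSup_upper) auto
  have lower: "(p xs - p y) / c y \<le> l" if "y \<in> D" "c y > 0" for y
    unfolding l_def using bdd that by (intro cSup_upper) auto
  have upper: "l \<le> (p z - p xs) / (- c z)" if "z \<in> D" "c z < 0" for z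
    unfolding l_def using slope that min by (intro cSup_least) (auto simp: divide_le_0_iff)
  have "p xs \<le> p y + l * c y" if "y \<in> D" for y
  proof (cases "c y" "0 :: real" rule: linorder_cases)
    case less
    then have "l * (- c y) \<le> p y - p xs"
      using upper[OF that less] by (subst (asm) pos_le_divide_eq) auto
    then show ?thesis by (simp add: algebra_simps)
  next
    case equal
    then show ?thesis using min that by simp
  next
    case greater
    then show ?thesis
      using lower[OF that greater] by (simp add: divide_le_eq algebra_simps)
  qed
  moreover have "l * c xs = 0"
    using upper[OF assms(4)] \<open>0 \<le> l\<close> assms(5) by (cases "c xs < 0") auto
  ultimately show ?thesis
    using \<open>0 \<le> l\<close> by blast
qed

lemma lagrange_multipliers_slater:
  fixes p :: "'a::real_vector \<Rightarrow> real"
  assumes "finite I" "convex D" "convex_on D p" "\<forall>i\<in>I. convex_on D (c i)"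
    "xs \<in> D" "\<forall>i\<in>I. c i xs \<le> 0" "\<forall>y\<in>D. (\<forall>i\<in>I. c i y \<le> 0) \<longrightarrow> p xs \<le> p y"
    "xb \<in> D" "\<forall>i\<in>I. c i xb < 0"
  shows "\<exists>l. (\<forall>i\<in>I. 0 \<le> l i \<and> l i * c i xs = 0) \<and> (\<forall>y\<in>D. p xs \<le> p y + (\<Sum>i\<in>I. l i * c i y))"
  using assms
proof (induction I arbitrary: D rule: finite_induct)
  case empty
  then show ?case by auto
next
  case (insert j I)
  \<comment> \<open>dualise the constraints in \<open>I\<close> over the set where constraint \<open>j\<close> holds, then constraint \<open>j\<close>\<close>
  define D' where "D' = {y \<in> D. c j y \<le> 0}"
  have "convex D'" "D' \<subseteq> D"
    unfolding D'_def using convex_sublevel_set insert.prems(3) by auto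
  then obtain l where l: "\<forall>i\<in>I. 0 \<le> l i \<and> l i * c i xs = 0"
    and min': "\<forall>y\<in>D'. p xs \<le> p y + (\<Sum>i\<in>I. l i * c i y)"
    using insert.IH[of D'] insert.prems convex_on_subset by (force simp: D'_def)
  let ?p' = "\<lambda>y. p y + (\<Sum>i\<in>I. l i * c i y)"
  have "?p' xs = p xs"
    using l by (simp add: sum.neutral)
  moreover have "convex_on D ?p'"
    using insert l by (intro convex_on_add convex_on_nonneg_combination) auto
  ultimately obtain lj where "lj \<ge> 0" "lj * c j xs = 0" and min_j: "\<forall>y\<in>D. p xs \<le> ?p' y + lj * c j y"
    using lagrange_multiplier_single_constraint[of D ?p' "c j" xs xb] insert.prems min'
    by (auto simp: D'_def)
  have "(\<Sum>i\<in>insert j I. (l(j := lj)) i * c i y) = lj * c j y + (\<Sum>i\<in>I. l i * c i y)" for y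
    using insert.hyps by (auto intro!: sum.cong)
  then show ?case
    using l \<open>lj \<ge> 0\<close> \<open>lj * c j xs = 0\<close> min_j insert.hyps
    by (intro exI[of _ "l(j := lj)"]) (auto simp: algebra_simps)
qed

lemma convex_kkt_slater:
  fixes p :: "'a::euclidean_space \<Rightarrow> real"
  assumes "finite I" "convex D" "convex_on D p" "\<forall>i\<in>I. convex_on UNIV (c i)"
    "xs \<in> D" "\<forall>i\<in>I. c i xs \<le> e i" "\<forall>y\<in>D. (\<forall>i\<in>I. c i y \<le> e i) \<longrightarrow> p xs \<le> p y"
    "xb \<in> D" "\<forall>i\<in>I. c i xb < e i"
  shows "\<exists>l. (\<forall>i\<in>I. 0 \<le> l i) \<and>
           (\<exists>g0 g. g0 \<in> subdiff D p xs \<and> (\<forall>i\<in>I. g i \<in> subdiff UNIV (c i) xs) \<and>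
              g0 + (\<Sum>i\<in>I. l i *\<^sub>R g i) = 0) \<and>
           (\<forall>i\<in>I. l i * (c i xs - e i) = 0)"
proof -
  have "\<forall>i\<in>I. convex_on D (\<lambda>y. c i y - e i)"
    using assms(2,4) convex_on_subset[OF _ subset_UNIV assms(2)]
    by (auto intro!: convex_on_diff simp: concave_on_const)
  then obtain l where l: "\<forall>i\<in>I. 0 \<le> l i \<and> l i * (c i xs - e i) = 0"
    and min: "\<forall>y\<in>D. p xs \<le> p y + (\<Sum>i\<in>I. l i * (c i y - e i))"
    using lagrange_multipliers_slater[of I D p "\<lambda>i y. c i y - e i" xs xb] assms(1-3,5-9) by auto
  have "(\<Sum>i\<in>I. l i * c i xs) = (\<Sum>i\<in>I. l i * e i)"
    using l by (intro sum.cong) (auto simp: right_diff_distrib)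
  then have "\<forall>y\<in>D. p xs + (\<Sum>i\<in>I. l i * c i xs) \<le> p y + (\<Sum>i\<in>I. l i * c i y)"
    using min by (simp add: right_diff_distrib sum_subtractf algebra_simps)
  then show ?thesis
    using minimizer_imp_subgradient_sum[of I D p c l xs] assms(1-5) l by auto
qed

section \<open>Smooth functions and proximal steps\<close>

lemma lipschitz_gradient_quadratic_bound:
  fixes f :: "'a::real_inner \<Rightarrow> real"
  assumes "convex D" "x \<in> D" "y \<in> D"
    and deriv: "\<forall>z\<in>D. (f has_derivative (\<lambda>h. inner (g z) h)) (at z)"
    and lip: "L-lipschitz_on D g"
  shows "f y \<le> f x + inner (g x) (y - x) + L / 2 * (norm (y - x))\<^sup>2"
proof -
  define d where "d = y - x"
  have seg: "x + t *\<^sub>R d \<in> D" if "0 \<le> t" "t \<le> 1" for t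
  proof -
    have "x + t *\<^sub>R d = (1 - t) *\<^sub>R x + t *\<^sub>R y" by (simp add: d_def algebra_simps)
    then show ?thesis using assms(1-3) that by (simp add: convex_alt)
  qed
  define h where "h t = f (x + t *\<^sub>R d) - t * inner (g x) d - L / 2 * t\<^sup>2 * (norm d)\<^sup>2" for t
  define h' where "h' t = inner (g (x + t *\<^sub>R d) - g x) d - L * t * (norm d)\<^sup>2" for t
  have "(h has_real_derivative h' t) (at t)" if "0 \<le> t" "t \<le> 1" for t
  proof -
    have "((\<lambda>s. x + s *\<^sub>R d) has_derivative (\<lambda>s. s *\<^sub>R d)) (at t)"
      by (auto intro!: derivative_eq_intros)
    then have "((\<lambda>s. f (x + s *\<^sub>R d)) has_derivative (\<lambda>s. inner (g (x + t *\<^sub>R d)) (s *\<^sub>R d))) (at t)"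
      using has_derivative_compose deriv seg[OF that] by blast
    then have "((\<lambda>s. f (x + s *\<^sub>R d)) has_real_derivative inner (g (x + t *\<^sub>R d)) d) (at t)"
      by (simp add: has_field_derivative_def mult_commute_abs)
    then show ?thesis
      unfolding h_def h'_def by (auto intro!: derivative_eq_intros simp: inner_diff_left)
  qed
  moreover have "h' t \<le> 0" if "0 \<le> t" "t \<le> 1" for t
  proof -
    have "inner (g (x + t *\<^sub>R d) - g x) d \<le> norm (g (x + t *\<^sub>R d) - g x) * norm d"
      by (rule norm_cauchy_schwarz)
    also have "\<dots> \<le> L * norm (t *\<^sub>R d) * norm d"
      using lip seg[OF that] assms(2) unfolding lipschitz_on_def dist_norm
      by (metis add_diff_cancel_left' mult_right_mono norm_ge_zero)
    finally show ?thesis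
      using that by (simp add: h'_def power2_eq_square mult.assoc)
  qed
  ultimately have "h 1 \<le> h 0"
    using DERIV_nonpos_imp_decreasing_open[of 0 1 h]
    by (meson DERIV_isCont atLeastAtMost_iff continuous_at_imp_continuous_on less_imp_le zero_le_one)
  then show ?thesis
    by (simp add: h_def d_def)
qed

lemma convex_on_norm_diff_power2:
  fixes z :: "'a::real_inner"
  shows "convex_on UNIV (\<lambda>y. (norm (y - z))\<^sup>2)"
proof (rule convex_onI)
  fix t :: real and u v :: 'a
  assume t: "0 < t" "t < 1"
  define a where "a = u - z"
  define b where "b = v - z"
  have "(1 - t) *\<^sub>R u + t *\<^sub>R v - z = (1 - t) *\<^sub>R a + t *\<^sub>R b"
    by (simp add: a_def b_def algebra_simps)
  moreover have "(norm ((1 - t) *\<^sub>R a + t *\<^sub>R b))\<^sup>2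
      = (1 - t) * (norm a)\<^sup>2 + t * (norm b)\<^sup>2 - t * (1 - t) * (norm (a - b))\<^sup>2"
    unfolding power2_norm_eq_inner
    by (simp add: inner_add_left inner_add_right inner_diff_left inner_diff_right inner_commute
        algebra_simps)
  moreover have "0 \<le> t * (1 - t) * (norm (a - b))\<^sup>2"
    using t by simp
  ultimately show "(norm ((1 - t) *\<^sub>R u + t *\<^sub>R v - z))\<^sup>2 \<le> (1 - t) * (norm (u - z))\<^sup>2 + t * (norm (v - z))\<^sup>2"
    by (simp add: a_def b_def)
qed simp

lemma mult_le_weighted_squares:
  fixes a b \<beta> :: real
  assumes "0 < \<beta>"
  shows "a * b \<le> a\<^sup>2 / (2 * \<beta>) + \<beta> / 2 * b\<^sup>2"
proof -
  have "2 * \<beta> * (a * b) \<le> a\<^sup>2 + \<beta>\<^sup>2 * b\<^sup>2"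
    using zero_le_power2[of "a - \<beta> * b"] by (simp add: power2_eq_square algebra_simps)
  then show ?thesis
    using assms by (simp add: field_simps power2_eq_square)
qed

lemma proximal_step_decrease:
  fixes \<phi> :: "'a::real_inner \<Rightarrow> real"
  assumes "convex C" "convex_on C \<phi>" "xp \<in> C" "xk \<in> C" "0 \<le> \<gamma>"
    and min: "\<forall>y\<in>C. \<phi> xp + \<gamma> / 2 * (norm (xp - xk))\<^sup>2 \<le> \<phi> y + \<gamma> / 2 * (norm (y - xk))\<^sup>2"
  shows "\<phi> xp + \<gamma> * (norm (xp - xk))\<^sup>2 \<le> \<phi> xk"
proof -
  define dd where "dd = (norm (xp - xk))\<^sup>2"
  \<comment> \<open>compare with the points \<open>(1 - t) xp + t xk\<close> and let \<open>t\<close> tend to \<open>0\<close>\<close>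
  have "\<phi> xp - \<phi> xk + \<gamma> * dd \<le> \<gamma> / 2 * dd * t" if "0 < t" "t < 1" for t
  proof -
    define y where "y = (1 - t) *\<^sub>R xp + t *\<^sub>R xk"
    have "y \<in> C"
      unfolding y_def using assms(1,3,4) that by (simp add: convex_alt)
    have "y - xk = (1 - t) *\<^sub>R (xp - xk)"
      unfolding y_def by (simp add: algebra_simps)
    then have "(norm (y - xk))\<^sup>2 = (1 - t)\<^sup>2 * dd"
      using that by (simp add: dd_def power_mult_distrib)
    moreover have "\<phi> y \<le> (1 - t) * \<phi> xp + t * \<phi> xk"
      unfolding y_def using convex_onD[OF assms(2)] assms(3,4) that by simp
    ultimately have "\<phi> xp + \<gamma> / 2 * dd \<le> (1 - t) * \<phi> xp + t * \<phi> xk + \<gamma> / 2 * ((1 - t)\<^sup>2 * dd)"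
      using min \<open>y \<in> C\<close> unfolding dd_def by fastforce
    then have "t * (\<phi> xp - \<phi> xk + \<gamma> * dd) \<le> t * (\<gamma> / 2 * dd * t)"
      by (simp add: power2_eq_square algebra_simps)
    then show ?thesis
      using that by simp
  qed
  then have "eventually (\<lambda>t. \<phi> xp - \<phi> xk + \<gamma> * dd \<le> \<gamma> / 2 * dd * t) (at_right 0)"
    using eventually_at_right_real[of 0 1] by (auto elim: eventually_mono)
  moreover have "((\<lambda>t. \<gamma> / 2 * dd * t) \<longlongrightarrow> 0) (at_right 0)"
    by (auto intro!: tendsto_eq_intros)
  ultimately have "\<phi> xp - \<phi> xk + \<gamma> * dd \<le> 0"
    by (intro tendsto_lowerbound) auto
  then show ?thesis
    by (simp add: dd_def)
qed

lemma inexact_proximal_step_descent: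
  fixes f r :: "'a::real_inner \<Rightarrow> real"
  assumes "convex D" "xk \<in> D" "xp \<in> D"
    and "\<forall>z\<in>D. (f has_derivative (\<lambda>h. inner (g z) h)) (at z)" "L-lipschitz_on D g"
    and prox: "inner G xp + r xp + \<gamma> * (norm (xp - xk))\<^sup>2 \<le> inner G xk + r xk"
    and "0 < \<beta>"
  shows "f xp + r xp \<le> f xk + r xk - (2 * \<gamma> - \<beta> - L) / 2 * (norm (xp - xk))\<^sup>2
                         + (norm (G - g xk))\<^sup>2 / (2 * \<beta>)"
proof -
  have "f xp \<le> f xk + inner (g xk) (xp - xk) + L / 2 * (norm (xp - xk))\<^sup>2"
    using lipschitz_gradient_quadratic_bound assms(1-5) by blast
  moreover have "inner (g xk - G) (xp - xk) \<le> norm (G - g xk) * norm (xp - xk)"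
    using norm_cauchy_schwarz[of "g xk - G" "xp - xk"] by (simp add: norm_minus_commute)
  moreover have "norm (G - g xk) * norm (xp - xk) \<le> (norm (G - g xk))\<^sup>2 / (2 * \<beta>) + \<beta> / 2 * (norm (xp - xk))\<^sup>2"
    using mult_le_weighted_squares \<open>0 < \<beta>\<close> by blast
  moreover have "(2 * \<gamma> - \<beta> - L) / 2 * (norm (xp - xk))\<^sup>2
      = \<gamma> * (norm (xp - xk))\<^sup>2 - \<beta> / 2 * (norm (xp - xk))\<^sup>2 - L / 2 * (norm (xp - xk))\<^sup>2"
    by (simp add: algebra_simps diff_divide_distrib)
  ultimately show ?thesis
    using prox unfolding inner_diff_left inner_diff_right by linarith
qed

section \<open>The LCSPG subproblems\<close>

lemma convex_feasible_set:
  assumes "convex D" "\<forall>i\<in>I. convex_on UNIV (c i)"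
  shows "convex {y \<in> D. \<forall>i\<in>I. c i y \<le> e i}"
proof -
  have "convex {y. c i y \<le> e i}" if "i \<in> I" for i
    using convex_sublevel_set[of UNIV "c i" "e i"] assms(2) that by simp
  moreover have "{y \<in> D. \<forall>i\<in>I. c i y \<le> e i} = D \<inter> (\<Inter>i\<in>I. {y. c i y \<le> e i})"
    by auto
  ultimately show ?thesis
    using assms(1) by (auto intro!: convex_Int convex_INT)
qed

lemma con_model_at_center: "con_model f gx L r x x = f x + r x"
  by (simp add: con_model_def)

lemma con_model_upper_bound:
  assumes "convex D" "x \<in> D" "y \<in> D"
    and "\<forall>z\<in>D. (f has_derivative (\<lambda>h. inner (g z) h)) (at z)" "L-lipschitz_on D g"
  shows "f y + r y \<le> con_model f (g x) L r x y"
  using lipschitz_gradient_quadratic_bound[OF assms] by (simp add: con_model_def)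

lemma convex_on_con_model:
  assumes "0 \<le> L" "convex_on UNIV r"
  shows "convex_on UNIV (con_model f gx L r x)"
proof -
  have "con_model f gx L r x = (\<lambda>y. (inner gx y + (f x - inner gx x)) + L / 2 * (norm (y - x))\<^sup>2 + r y)"
    by (auto simp: con_model_def inner_diff_right)
  then show ?thesis
    using assms by (auto intro!: convex_on_add convex_on_inner_affine convex_on_cmul convex_on_norm_diff_power2)
qed

lemma convex_on_obj_model:
  assumes "convex D" "0 \<le> \<gamma>" "convex_on D r"
  shows "convex_on D (obj_model G \<gamma> x r)"
proof -
  have "convex_on D (\<lambda>y. (inner G y + 0) + \<gamma> / 2 * (norm (y - x))\<^sup>2 + r y)"
    using assms by (intro convex_on_add convex_on_inner_affine convex_on_cmul
        convex_on_subset[OF convex_on_norm_diff_power2]) auto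
  then show ?thesis
    by (simp add: obj_model_def[abs_def])
qed

lemma con_model_next_center_strict:
  assumes "convex D" "x \<in> D" "y \<in> D"
    and "\<forall>z\<in>D. (f has_derivative (\<lambda>h. inner (g z) h)) (at z)" "L-lipschitz_on D g"
    and "con_model f (g x) L r x y \<le> a" "a < b"
  shows "con_model f (g y) L r y y < b"
  using con_model_upper_bound[OF assms(1-5), of r] assms(6,7) by (simp add: con_model_at_center)

lemma lcspg_step_descent:
  fixes f r :: "'a::real_inner \<Rightarrow> real"
  assumes "convex D" "convex_on D r" "0 \<le> \<gamma>" "\<forall>i\<in>I. convex_on UNIV (c i)"
    and "xk \<in> D" "\<forall>i\<in>I. c i xk \<le> e i" "xp \<in> D" "\<forall>i\<in>I. c i xp \<le> e i"
    and optimal: "\<forall>y\<in>D. (\<forall>i\<in>I. c i y \<le> e i) \<longrightarrow> obj_model G \<gamma> xk r xp \<le> obj_model G \<gamma> xk r y"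
    and "\<forall>z\<in>D. (f has_derivative (\<lambda>h. inner (g z) h)) (at z)" "L-lipschitz_on D g"
    and "0 < \<beta>"
  shows "f xp + r xp \<le> f xk + r xk - (2 * \<gamma> - \<beta> - L) / 2 * (norm (xp - xk))\<^sup>2
                         + (norm (G - g xk))\<^sup>2 / (2 * \<beta>)"
proof -
  let ?feasible = "{y \<in> D. \<forall>i\<in>I. c i y \<le> e i}"
  have "convex ?feasible"
    using convex_feasible_set assms(1,4) .
  moreover have "convex_on D (\<lambda>y. (inner G y + 0) + r y)"
    using assms(1,2) by (intro convex_on_add convex_on_inner_affine)
  ultimately have "convex_on ?feasible (\<lambda>y. inner G y + r y)"
    using convex_on_subset by force
  then have "inner G xp + r xp + \<gamma> * (norm (xp - xk))\<^sup>2 \<le> inner G xk + r xk"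
    using \<open>convex ?feasible\<close> assms(3,5-8) optimal
    by (intro proximal_step_decrease[where C = ?feasible]) (auto simp: obj_model_def algebra_simps)
  then show ?thesis
    using inexact_proximal_step_descent assms(1,5,7,10-12) by blast
qed

lemma lcspg_step:
  fixes f r :: "'a::euclidean_space \<Rightarrow> real"
  assumes "finite I" "convex D" "convex_on D r" "0 \<le> \<gamma>" "\<forall>i\<in>I. convex_on UNIV (c i)"
    and "xk \<in> D" "\<forall>i\<in>I. c i xk < e i" "xp \<in> D" "\<forall>i\<in>I. c i xp \<le> e i"
    and optimal: "\<forall>y\<in>D. (\<forall>i\<in>I. c i y \<le> e i) \<longrightarrow> obj_model G \<gamma> xk r xp \<le> obj_model G \<gamma> xk r y"
    and "\<forall>z\<in>D. (f has_derivative (\<lambda>h. inner (g z) h)) (at z)" "L-lipschitz_on D g"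
  shows "(\<exists>l. (\<forall>i\<in>I. 0 \<le> l i) \<and>
            (\<exists>g0 g'. g0 \<in> subdiff D (obj_model G \<gamma> xk r) xp \<and> (\<forall>i\<in>I. g' i \<in> subdiff UNIV (c i) xp) \<and>
               g0 + (\<Sum>i\<in>I. l i *\<^sub>R g' i) = 0) \<and>
            (\<forall>i\<in>I. l i * (c i xp - e i) = 0))
       \<and> (\<forall>\<beta>. 0 < \<beta> \<and> \<beta> < 2 * \<gamma> - L \<longrightarrow>
            f xp + r xp \<le> f xk + r xk - (2 * \<gamma> - \<beta> - L) / 2 * (norm (xp - xk))\<^sup>2
                                  + (norm (G - g xk))\<^sup>2 / (2 * \<beta>))"
proof
  show "\<exists>l. (\<forall>i\<in>I. 0 \<le> l i) \<and>
            (\<exists>g0 g'. g0 \<in> subdiff D (obj_model G \<gamma> xk r) xp \<and> (\<forall>i\<in>I. g' i \<in> subdiff UNIV (c i) xp) \<and>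
               g0 + (\<Sum>i\<in>I. l i *\<^sub>R g' i) = 0) \<and>
            (\<forall>i\<in>I. l i * (c i xp - e i) = 0)"
    using assms(1-9) optimal by (intro convex_kkt_slater convex_on_obj_model) auto
  show "\<forall>\<beta>. 0 < \<beta> \<and> \<beta> < 2 * \<gamma> - L \<longrightarrow>
            f xp + r xp \<le> f xk + r xk - (2 * \<gamma> - \<beta> - L) / 2 * (norm (xp - xk))\<^sup>2
                                  + (norm (G - g xk))\<^sup>2 / (2 * \<beta>)"
    using assms(2-6,7-12) by (intro allI impI lcspg_step_descent[where I = I and c = c and e = e])
      (auto intro: less_imp_le)
qed

theorem mainTheorem9:
  fixes m :: nat
    and f chi :: "nat \<Rightarrow> 'a::euclidean_space \<Rightarrow> real"
    and grad :: "nat \<Rightarrow> 'a \<Rightarrow> 'a"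
    and L :: "nat \<Rightarrow> real"
    and D :: "'a set"
    and \<eta> :: "nat \<Rightarrow> real"
    and P :: "'s measure"
    and F :: "'a \<Rightarrow> 's \<Rightarrow> real"
    and gradF :: "'a \<Rightarrow> 's \<Rightarrow> 'a"
    and \<sigma> :: real
    and x :: "nat \<Rightarrow> 'a"
    and eta :: "nat \<Rightarrow> nat \<Rightarrow> real"
    and b :: "nat \<Rightarrow> nat"
    and \<xi> :: "nat \<Rightarrow> nat \<Rightarrow> 's"
    and G :: "nat \<Rightarrow> 'a"
    and \<gamma> :: "nat \<Rightarrow> real"
  defines "\<psi> \<equiv> (\<lambda>i y. f i y + chi i y)"
  defines "X \<equiv> {y \<in> D. \<forall>i\<in>{1..m}. \<psi> i y \<le> \<eta> i}"
  \<comment> \<open>\<open>D\<close> is the effective domain of \<open>chi 0\<close>\<close>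
  assumes chi0: "proper_convex_lsc D (chi 0)"
    and chi_i: "\<forall>i\<in>{1..m}. convex_on UNIV (chi i) \<and> continuous_on D (chi i)"
    and f_diff: "\<forall>i\<in>{0..m}. \<forall>y\<in>D. (f i has_derivative (\<lambda>h. inner (grad i y) h)) (at y)"
    and f_lip: "\<forall>i\<in>{0..m}. (L i)-lipschitz_on D (grad i)"
    and opt_finite: "bdd_below (\<psi> 0 ` X)"
    and X_ne: "X \<noteq> {}"
    and X_compact: "compact X"
    and P_prob: "prob_space P"
    and f0_exp: "\<forall>y. integrable P (F y) \<and> f 0 y = (\<integral>s. F y s \<partial>P)"
    and F_diff: "\<forall>s\<in>space P. \<forall>y\<in>D. ((\<lambda>z. F z s) has_derivative (\<lambda>h. inner (gradF y s) h)) (at y)"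
    and unbiased: "\<forall>y\<in>D. integrable P (gradF y) \<and> (\<integral>s. gradF y s \<partial>P) = grad 0 y"
    and var_bound: "\<forall>y\<in>D. integrable P (\<lambda>s. (norm (gradF y s - grad 0 y))\<^sup>2) \<and>
                       (\<integral>s. (norm (gradF y s - grad 0 y))\<^sup>2 \<partial>P) \<le> \<sigma>\<^sup>2"
    and x0: "x 0 \<in> D"
    and eta0: "\<forall>i\<in>{1..m}. \<psi> i (x 0) < eta 0 i \<and> eta 0 i < \<eta> i"
    and eta_step: "\<forall>k. \<forall>i\<in>{1..m}. eta k i < eta (Suc k) i \<and> eta (Suc k) i < \<eta> i"
    and batch: "\<forall>k. 1 \<le> b k \<and> (\<forall>j\<in>{1..b k}. \<xi> j k \<in> space P)"
    and G_def: "\<forall>k. G k = (1 / real (b k)) *\<^sub>R (\<Sum>j\<in>{1..b k}. gradF (x k) (\<xi> j k))"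
    and gamma: "\<forall>k. \<gamma> k > L 0 / 2"
    and step: "\<forall>k. x (Suc k) \<in> D \<and>
         (\<forall>i\<in>{1..m}. con_model (f i) (grad i (x k)) (L i) (chi i) (x k) (x (Suc k)) \<le> eta k i) \<and>
         (\<forall>y\<in>D. (\<forall>i\<in>{1..m}. con_model (f i) (grad i (x k)) (L i) (chi i) (x k) y \<le> eta k i) \<longrightarrow>
             obj_model (G k) (\<gamma> k) (x k) (chi 0) (x (Suc k))
               \<le> obj_model (G k) (\<gamma> k) (x k) (chi 0) y)"
  shows "\<forall>k.
     (\<exists>lam :: nat \<Rightarrow> real. (\<forall>i\<in>{1..m}. 0 \<le> lam i) \<and>
        (\<exists>g0 g. g0 \<in> subdiff D (obj_model (G k) (\<gamma> k) (x k) (chi 0)) (x (Suc k)) \<and>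
           (\<forall>i\<in>{1..m}. g i \<in> subdiff UNIV (con_model (f i) (grad i (x k)) (L i) (chi i) (x k)) (x (Suc k))) \<and>
           g0 + (\<Sum>i\<in>{1..m}. lam i *\<^sub>R g i) = 0) \<and>
        (\<forall>i\<in>{1..m}. lam i * (con_model (f i) (grad i (x k)) (L i) (chi i) (x k) (x (Suc k)) - eta k i) = 0))
   \<and> (\<forall>\<beta>. 0 < \<beta> \<and> \<beta> < 2 * \<gamma> k - L 0 \<longrightarrow>
        \<psi> 0 (x (Suc k)) \<le> \<psi> 0 (x k) - (2 * \<gamma> k - \<beta> - L 0) / 2 * (norm (x (Suc k) - x k))\<^sup>2
                           + (norm (G k - grad 0 (x k)))\<^sup>2 / (2 * \<beta>))"
proof -
  have "convex D" "convex_on D (chi 0)"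
    using chi0 by (auto simp: proper_convex_lsc_def)
  have L_nonneg: "0 \<le> L i" if "i \<le> m" for i
    using f_lip that lipschitz_on_nonneg[of "L i" D "grad i"] by auto
  have x_in_D: "x k \<in> D" for k
    using x0 step by (cases k) auto
  have slater: "con_model (f i) (grad i (x k)) (L i) (chi i) (x k) (x k) < eta k i"
    if "i \<in> {1..m}" for i k
  proof (cases k)
    case 0
    then show ?thesis using eta0 that by (simp add: con_model_at_center \<psi>_def)
  next
    case (Suc j)
    then show ?thesis
      using step eta_step f_diff f_lip that
      by (intro con_model_next_center_strict[OF \<open>convex D\<close> x_in_D[of j] x_in_D, where a = "eta j i"]) auto
  qed
  have "0 \<le> \<gamma> k" for k
    using gamma[rule_format, of k] L_nonneg[of 0] by linarith
  moreover have "\<forall>i\<in>{1..m}. convex_on UNIV (con_model (f i) (grad i (x k)) (L i) (chi i) (x k))" for k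
    using chi_i L_nonneg by (auto intro: convex_on_con_model)
  ultimately show ?thesis
    unfolding \<psi>_def using step slater f_diff f_lip
    by (intro allI lcspg_step[OF finite_atLeastAtMost \<open>convex D\<close> \<open>convex_on D (chi 0)\<close> _ _ x_in_D _ x_in_D])
      auto
qed

end
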